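(* Maximal matching can be solved by a deterministic LOCAL algorithm in $O(\log n/\log\log n)$ rounds on $n$-node trees.
   Context: A maximal matching of a graph is a set of pairwise non-adjacent edges such that every edge of the graph shares an endpoint with some edge of the set. LOCAL model: nodes have unique IDs from $\{1,\dots,n^c\}$, know $n$, have unbounded computation, and communicate with neighbors in synchronous rounds with unbounded messages. *)

theory Defs
  imports Main "HOL-Library.Multiset" "HOL-Library.Landau_Symbols"
begin

definition simple_graph :: "nat set \<Rightarrow> (nat \<Rightarrow> nat \<Rightarrow> bool) \<Rightarrow> bool" where
  "simple_graph V E \<longleftrightarrow> finite V \<and>
     (\<forall>u v. E u v \<longrightarrow> u \<in> V \<and> v \<in> V \<and> u \<noteq> v \<and> E v u)"

definition graph_connected :: "nat set \<Rightarrow> (nat \<Rightarrow> nat \<Rightarrow> bool) \<Rightarrow> bool" where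
  "graph_connected V E \<longleftrightarrow> (\<forall>u\<in>V. \<forall>v\<in>V. E\<^sup>*\<^sup>* u v)"

definition graph_acyclic :: "nat set \<Rightarrow> (nat \<Rightarrow> nat \<Rightarrow> bool) \<Rightarrow> bool" where
  "graph_acyclic V E \<longleftrightarrow> \<not> (\<exists>cyc. length cyc \<ge> 3 \<and> distinct cyc \<and> set cyc \<subseteq> V \<and>
       (\<forall>i. i + 1 < length cyc \<longrightarrow> E (cyc ! i) (cyc ! (i + 1))) \<and> E (last cyc) (hd cyc))"

definition is_tree :: "nat set \<Rightarrow> (nat \<Rightarrow> nat \<Rightarrow> bool) \<Rightarrow> bool" where
  "is_tree V E \<longleftrightarrow> simple_graph V E \<and> V \<noteq> {} \<and> graph_connected V E \<and> graph_acyclic V E"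

definition graph_edges :: "(nat \<Rightarrow> nat \<Rightarrow> bool) \<Rightarrow> nat set set" where
  "graph_edges E = {{u, v} | u v. E u v}"

definition is_matching :: "(nat \<Rightarrow> nat \<Rightarrow> bool) \<Rightarrow> nat set set \<Rightarrow> bool" where
  "is_matching E M \<longleftrightarrow> M \<subseteq> graph_edges E \<and> (\<forall>e\<in>M. \<forall>e'\<in>M. e \<noteq> e' \<longrightarrow> e \<inter> e' = {})"

definition is_maximal_matching :: "(nat \<Rightarrow> nat \<Rightarrow> bool) \<Rightarrow> nat set set \<Rightarrow> bool" where
  "is_maximal_matching E M \<longleftrightarrow> is_matching E M \<and>
     (\<forall>e\<in>graph_edges E. \<exists>e'\<in>M. e \<inter> e' \<noteq> {})"

definition valid_ids :: "nat \<Rightarrow> nat set \<Rightarrow> (nat \<Rightarrow> nat) \<Rightarrow> bool" where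
  "valid_ids c V ident \<longleftrightarrow> inj_on ident V \<and> ident ` V \<subseteq> {1 .. card V ^ c}"

text \<open>Deterministic LOCAL algorithm (full-information form, unbounded messages and
  computation): every node knows n and its ID; its state is a natural number
  (an arbitrary encoding chosen by the algorithm). In every round each node sends its
  whole state to all neighbours and updates its state from its own state and the
  multiset of received messages.  After the last round each node outputs either
  None (unmatched) or Some i, i the ID of its matched partner.\<close>

primrec local_state ::
  "(nat \<Rightarrow> nat \<Rightarrow> nat) \<Rightarrow> (nat \<Rightarrow> nat \<Rightarrow> nat \<Rightarrow> nat multiset \<Rightarrow> nat) \<Rightarrow>
   nat set \<Rightarrow> (nat \<Rightarrow> nat \<Rightarrow> bool) \<Rightarrow> (nat \<Rightarrow> nat) \<Rightarrow> nat \<Rightarrow> nat \<Rightarrow> nat" where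
  "local_state init step V E ident 0 v = init (card V) (ident v)"
| "local_state init step V E ident (Suc t) v =
     step (card V) t (local_state init step V E ident t v)
       (image_mset (local_state init step V E ident t) (mset_set {u \<in> V. E v u}))"

definition solves_maximal_matching ::
  "nat set \<Rightarrow> (nat \<Rightarrow> nat \<Rightarrow> bool) \<Rightarrow> (nat \<Rightarrow> nat) \<Rightarrow> (nat \<Rightarrow> nat option) \<Rightarrow> bool" where
  "solves_maximal_matching V E ident outp \<longleftrightarrow>
     (\<forall>v\<in>V. outp v = None \<or>
        (\<exists>u. E v u \<and> outp v = Some (ident u) \<and> outp u = Some (ident v))) \<and>
     is_maximal_matching E {{u, v} | u v. E u v \<and> outp u = Some (ident v)}"

end

theory Submission
  imports Defs "HOL-Library.Countable" "HOL-Library.Discrete_Functions"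
    "HOL-Library.Product_Lexorder" "HOL-Real_Asymp.Real_Asymp"
begin

(* In a forest fewer than 2k/(d+1) of any k vertices have more than d neighbours among them.
   Repeatedly removing the vertices with at most d = 2^(a+1) remaining neighbours therefore
   divides the number of remaining vertices by 2^a per round; with a ~ (log log n)/2 every
   vertex is removed, and so assigned a layer, after O(log n / log log n) rounds.  Orienting
   each edge towards the larger (layer, identifier) pair gives out-degree at most d, so
   numbering the out-edges of each vertex splits the tree into d rooted forests, and two
   Cole-Vishkin steps colour each of them properly with O(log log n) colours.  The
   O(d log log n) = o(log n / log log n) classes (label, colour) are then processed one after
   another in three rounds each: propose along the out-edge, accept the least proposer,
   confirm.  Within a class proposals go from children to parents of a properly coloured
   forest, so a vertex never both proposes and receives a proposal, and after its class every
   edge has a matched endpoint. *)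

primrec local_run ::
  "(nat \<Rightarrow> nat \<Rightarrow> 'a) \<Rightarrow> (nat \<Rightarrow> nat \<Rightarrow> 'a \<Rightarrow> 'a multiset \<Rightarrow> 'a) \<Rightarrow>
   nat set \<Rightarrow> (nat \<Rightarrow> nat \<Rightarrow> bool) \<Rightarrow> (nat \<Rightarrow> nat) \<Rightarrow> nat \<Rightarrow> nat \<Rightarrow> 'a" where
  "local_run init step V E ident 0 v = init (card V) (ident v)"
| "local_run init step V E ident (Suc t) v =
     step (card V) t (local_run init step V E ident t v)
       (image_mset (local_run init step V E ident t) (mset_set {u \<in> V. E v u}))"

lemma local_state_encode:
  fixes init :: "nat \<Rightarrow> nat \<Rightarrow> 'a::countable"
  shows "local_state (\<lambda>n x. to_nat (init n x))
      (\<lambda>n t s M. to_nat (step n t (from_nat s) (image_mset from_nat M))) V E ident t v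
    = to_nat (local_run init step V E ident t v)"
  by (induction t arbitrary: v) (simp_all add: multiset.map_comp comp_def)

section \<open>Cole--Vishkin colour reduction\<close>

definition first_diff_bit :: "nat \<Rightarrow> nat \<Rightarrow> nat" where
  "first_diff_bit x y = (LEAST k. bit x k \<noteq> bit y k)"

lemma bit_first_diff_bit:
  assumes "x \<noteq> y" shows "bit x (first_diff_bit x y) \<noteq> bit y (first_diff_bit x y)"
proof -
  have "\<exists>k. bit x k \<noteq> bit y k" using assms bit_eq_iff by blast
  then show ?thesis unfolding first_diff_bit_def by (rule LeastI_ex)
qed

lemma first_diff_bit_less:
  assumes "x \<noteq> y" "x < 2 ^ B" "y < 2 ^ B" shows "first_diff_bit x y < B"
proof (rule ccontr)
  assume "\<not> first_diff_bit x y < B"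
  then have "(2::nat) ^ B \<le> 2 ^ first_diff_bit x y" by (simp add: power_increasing)
  then have "x < 2 ^ first_diff_bit x y" "y < 2 ^ first_diff_bit x y"
    using assms(2,3) by linarith+
  then have "\<not> bit x (first_diff_bit x y)" "\<not> bit y (first_diff_bit x y)"
    by (simp_all add: bit_iff_odd)
  with bit_first_diff_bit[OF assms(1)] show False by metis
qed

lemma double_plus_of_bool_eq_iff:
  "2 * a + of_bool p = 2 * b + (of_bool q :: nat) \<longleftrightarrow> a = b \<and> p = q"
  by (cases p; cases q; simp; presburger)

definition cole_vishkin :: "nat \<Rightarrow> nat \<Rightarrow> nat" where
  "cole_vishkin x y = 2 * first_diff_bit x y + of_bool (bit x (first_diff_bit x y))"

lemma cole_vishkin_neq:
  assumes "x \<noteq> y" "y \<noteq> z" shows "cole_vishkin x y \<noteq> cole_vishkin y z"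
proof
  assume "cole_vishkin x y = cole_vishkin y z"
  then have "first_diff_bit x y = first_diff_bit y z"
    "bit x (first_diff_bit x y) = bit y (first_diff_bit y z)"
    unfolding cole_vishkin_def double_plus_of_bool_eq_iff by auto
  with bit_first_diff_bit[OF assms(1)] show False by metis
qed

lemma cole_vishkin_neq_mod2:
  assumes "x \<noteq> y" shows "cole_vishkin x y \<noteq> y mod 2"
proof
  assume "cole_vishkin x y = y mod 2"
  then have "2 * first_diff_bit x y + of_bool (bit x (first_diff_bit x y)) = of_bool (odd y)"
    unfolding cole_vishkin_def by (simp add: odd_iff_mod_2_eq_one)
  then have "first_diff_bit x y = 0" "bit x (first_diff_bit x y) = odd y"
    using double_plus_of_bool_eq_iff[of _ _ 0] by auto
  with bit_first_diff_bit[OF assms] show False by (simp add: bit_0)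
qed

lemma cole_vishkin_less:
  assumes "x \<noteq> y" "x < 2 ^ B" "y < 2 ^ B" shows "cole_vishkin x y < 2 * B"
  using first_diff_bit_less[OF assms] unfolding cole_vishkin_def by simp

section \<open>Vertices of high degree in forests\<close>

definition degree_in :: "(nat \<Rightarrow> nat \<Rightarrow> bool) \<Rightarrow> nat set \<Rightarrow> nat \<Rightarrow> nat" where
  "degree_in E A v = card {u\<in>A. E v u}"

definition simple_paths :: "(nat \<Rightarrow> nat \<Rightarrow> bool) \<Rightarrow> nat set \<Rightarrow> nat list set" where
  "simple_paths E A = {xs. xs \<noteq> [] \<and> distinct xs \<and> set xs \<subseteq> A \<and>
     (\<forall>i. i + 1 < length xs \<longrightarrow> E (xs ! i) (xs ! (i + 1)))}"

lemma finite_simple_paths: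
  assumes "finite A" shows "finite (simple_paths E A)"
proof (rule finite_subset)
  show "simple_paths E A \<subseteq> {xs. set xs \<subseteq> A \<and> length xs \<le> card A}"
  proof
    fix xs assume "xs \<in> simple_paths E A"
    then have "distinct xs" "set xs \<subseteq> A" unfolding simple_paths_def by auto
    moreover from this have "length xs \<le> card A"
      using distinct_card[of xs] card_mono[OF assms] by metis
    ultimately show "xs \<in> {xs. set xs \<subseteq> A \<and> length xs \<le> card A}" by simp
  qed
  show "finite {xs. set xs \<subseteq> A \<and> length xs \<le> card A}"
    using finite_lists_length_le[OF assms] .
qed

lemma simple_paths_snoc:
  assumes "xs \<in> simple_paths E A" "u \<in> A" "u \<notin> set xs" "E (last xs) u"
  shows "xs @ [u] \<in> simple_paths E A"
  unfolding simple_paths_def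
proof (intro CollectI conjI allI impI)
  fix i assume i: "i + 1 < length (xs @ [u])"
  show "E ((xs @ [u]) ! i) ((xs @ [u]) ! (i + 1))"
  proof (cases "i + 1 < length xs")
    case True
    then show ?thesis using assms(1) by (simp add: simple_paths_def nth_append)
  next
    case False
    then have "i = length xs - 1" "xs \<noteq> []" using i assms(1) by (auto simp: simple_paths_def)
    then show ?thesis using assms(4) by (simp add: nth_append last_conv_nth)
  qed
qed (use assms(1-3) in \<open>simp_all add: simple_paths_def\<close>)

lemma acyclic_no_closing_edge:
  assumes "graph_acyclic V E" "A \<subseteq> V" "xs \<in> simple_paths E A"
    and "k + 3 \<le> length xs" "E (last xs) (xs ! k)"
  shows False
proof -
  let ?cyc = "drop k xs"
  have "length ?cyc \<ge> 3" "distinct ?cyc" "set ?cyc \<subseteq> V"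
    using assms(2-4) set_drop_subset[of k xs] by (auto simp: simple_paths_def)
  moreover have "\<forall>i. i + 1 < length ?cyc \<longrightarrow> E (?cyc ! i) (?cyc ! (i + 1))"
    using assms(3) by (simp add: simple_paths_def add.assoc)
  moreover have "E (last ?cyc) (hd ?cyc)"
    using assms(4,5) by (simp add: hd_drop_conv_nth)
  ultimately show False using assms(1) unfolding graph_acyclic_def by blast
qed

lemma longest_simple_path:
  assumes "finite A" "A \<noteq> {}"
  obtains xs where "xs \<in> simple_paths E A" "\<And>ys. ys \<in> simple_paths E A \<Longrightarrow> length ys \<le> length xs"
proof -
  obtain a where "a \<in> A" using assms(2) by blast
  then have "[a] \<in> simple_paths E A" unfolding simple_paths_def by simp
  then have ne: "length ` simple_paths E A \<noteq> {}" by blast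
  have fin: "finite (length ` simple_paths E A)" using finite_simple_paths[OF assms(1)] by blast
  obtain xs where "xs \<in> simple_paths E A" "length xs = Max (length ` simple_paths E A)"
    using Max_in[OF fin ne] by auto
  then show ?thesis using that Max_ge[OF fin] by simp
qed

text \<open>The last vertex of a longest path has no neighbour off the path (it would extend the
  path) and none on it except its predecessor (it would close a cycle).\<close>
lemma acyclic_has_low_degree_vertex:
  assumes sg: "simple_graph V E" and ac: "graph_acyclic V E" and A: "A \<subseteq> V" "A \<noteq> {}"
  shows "\<exists>w\<in>A. degree_in E A w \<le> 1"
proof (rule ccontr)
  assume "\<not> ?thesis"
  then have deg2: "\<And>w. w \<in> A \<Longrightarrow> 2 \<le> card {u\<in>A. E w u}"
    unfolding degree_in_def by force
  have "finite A" using sg A finite_subset unfolding simple_graph_def by blast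
  then obtain xs where xs: "xs \<in> simple_paths E A"
    and longest: "\<And>ys. ys \<in> simple_paths E A \<Longrightarrow> length ys \<le> length xs"
    using longest_simple_path A(2) by blast
  have xs_props: "xs \<noteq> []" "set xs \<subseteq> A" using xs unfolding simple_paths_def by auto
  define z where "z = last xs"
  have "z \<in> A" using xs_props unfolding z_def by auto
  obtain u where u: "u \<in> A" "E z u" and not_pred: "2 \<le> length xs \<Longrightarrow> u \<noteq> xs ! (length xs - 2)"
  proof -
    have "\<not> {u\<in>A. E z u} \<subseteq> {xs ! (length xs - 2)}"
    proof
      assume "{u\<in>A. E z u} \<subseteq> {xs ! (length xs - 2)}"
      then have "card {u\<in>A. E z u} \<le> 1" using card_mono[of "{xs ! (length xs - 2)}"] by simp
      with deg2[OF \<open>z \<in> A\<close>] show False by simp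
    qed
    then show ?thesis using that by blast
  qed
  show False
  proof (cases "u \<in> set xs")
    case False
    then have "xs @ [u] \<in> simple_paths E A" using simple_paths_snoc xs u unfolding z_def by blast
    with longest show False by fastforce
  next
    case True
    then obtain k where k: "k < length xs" "xs ! k = u" by (auto simp: in_set_conv_nth)
    have "z = xs ! (length xs - 1)" using xs_props unfolding z_def by (simp add: last_conv_nth)
    then have "k \<noteq> length xs - 1" "2 \<le> length xs \<Longrightarrow> k \<noteq> length xs - 2"
      using sg u not_pred k unfolding simple_graph_def by auto
    then have "k + 3 \<le> length xs" using k(1) by (cases "2 \<le> length xs") auto
    then show False using acyclic_no_closing_edge[OF ac A(1) xs] u k unfolding z_def by blast
  qed
qed

lemma degree_in_remove:
  assumes "finite A" "w \<noteq> v"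
  shows "degree_in E A v = degree_in E (A - {w}) v + of_bool (w \<in> A \<and> E v w)"
proof -
  have "{u\<in>A. E v u} = {u\<in>A - {w}. E v u} \<union> (if w \<in> A \<and> E v w then {w} else {})" by auto
  then show ?thesis using assms(1) unfolding degree_in_def by (auto simp: card_insert_if)
qed

text \<open>The sum counts every edge twice: a forest on \<open>k \<ge> 1\<close> vertices has at most \<open>k - 1\<close> edges.\<close>
lemma acyclic_degree_sum:
  assumes sg: "simple_graph V E" and ac: "graph_acyclic V E"
  shows "A \<subseteq> V \<Longrightarrow> A \<noteq> {} \<Longrightarrow> (\<Sum>v\<in>A. degree_in E A v) + 2 \<le> 2 * card A"
proof (induction "card A" arbitrary: A)
  case 0
  then show ?case using sg finite_subset unfolding simple_graph_def by fastforce
next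
  case (Suc m)
  have finA: "finite A" using sg Suc.prems finite_subset unfolding simple_graph_def by blast
  have irr: "E u v \<Longrightarrow> u \<noteq> v" and sym: "E u v \<Longrightarrow> E v u" for u v
    using sg unfolding simple_graph_def by blast+
  obtain w where w: "w \<in> A" "degree_in E A w \<le> 1"
    using acyclic_has_low_degree_vertex[OF sg ac Suc.prems] by blast
  define A' where "A' = A - {w}"
  have "(\<Sum>v\<in>A'. degree_in E A v) = (\<Sum>v\<in>A'. degree_in E A' v + of_bool (E v w))"
    using degree_in_remove[OF finA, of w] w(1) unfolding A'_def by (intro sum.cong) auto
  also have "\<dots> = (\<Sum>v\<in>A'. degree_in E A' v) + card {v\<in>A'. E v w}"
    using finA unfolding A'_def by (simp add: sum.distrib Int_def conj_commute)
  also have "{v\<in>A'. E v w} = {u\<in>A. E w u}" unfolding A'_def using irr sym by blast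
  finally have sum_eq: "(\<Sum>v\<in>A. degree_in E A v) = (\<Sum>v\<in>A'. degree_in E A' v) + 2 * degree_in E A w"
    using finA w(1) unfolding A'_def degree_in_def by (simp add: sum.remove)
  show ?case
  proof (cases "A' = {}")
    case True
    then have "A = {w}" using w(1) unfolding A'_def by auto
    then show ?thesis using sum_eq True irr unfolding degree_in_def by simp
  next
    case False
    have "m = card A'" unfolding A'_def using Suc.hyps(2) finA w(1) by simp
    then have "(\<Sum>v\<in>A'. degree_in E A' v) + 2 \<le> 2 * card A'"
      using Suc.hyps(1) False Suc.prems(1) unfolding A'_def by auto
    then show ?thesis using sum_eq w(2) \<open>m = card A'\<close> Suc.hyps(2) by simp
  qed
qed

lemma acyclic_card_high_degree:
  assumes "simple_graph V E" "graph_acyclic V E" "A \<subseteq> V"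
  shows "card {v\<in>A. d < degree_in E A v} * (d + 1) \<le> 2 * card A"
proof (cases "A = {}")
  case False
  have finA: "finite A" using assms(1,3) finite_subset unfolding simple_graph_def by blast
  have "card {v\<in>A. d < degree_in E A v} * (d + 1) = (\<Sum>v | v \<in> A \<and> d < degree_in E A v. d + 1)"
    by simp
  also have "\<dots> \<le> (\<Sum>v | v \<in> A \<and> d < degree_in E A v. degree_in E A v)"
    by (rule sum_mono) auto
  also have "\<dots> \<le> (\<Sum>v\<in>A. degree_in E A v)" by (rule sum_mono2[OF finA]) auto
  also have "\<dots> \<le> 2 * card A" using acyclic_degree_sum[OF assms False] by simp
  finally show ?thesis .
qed simp

section \<open>Maximal matchings from consistent partner choices\<close>

lemma consistent_output_answered:
  assumes sg: "simple_graph V E" and inj: "inj_on ident V"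
    and consistent: "\<And>v x. v \<in> V \<Longrightarrow> outp v = Some x \<Longrightarrow>
      \<exists>u. E v u \<and> x = ident u \<and> outp u = Some (ident v)"
    and uv: "E u v" "outp u = Some (ident v)"
  shows "outp v = Some (ident u)"
proof -
  have in_V: "E a b \<Longrightarrow> a \<in> V \<and> b \<in> V" for a b using sg unfolding simple_graph_def by blast
  obtain w where w: "E u w" "ident v = ident w" "outp w = Some (ident u)"
    using consistent uv in_V by blast
  then have "v = w" using inj_onD[OF inj] in_V uv(1) by blast
  then show ?thesis using w(3) by simp
qed

lemma consistent_output_is_matching:
  assumes sg: "simple_graph V E" and inj: "inj_on ident V"
    and consistent: "\<And>v x. v \<in> V \<Longrightarrow> outp v = Some x \<Longrightarrow>
      \<exists>u. E v u \<and> x = ident u \<and> outp u = Some (ident v)"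
  shows "is_matching E {{u, v} | u v. E u v \<and> outp u = Some (ident v)}"
proof -
  define M where "M = {{u, v} | u v. E u v \<and> outp u = Some (ident v)}"
  have in_V: "E u v \<Longrightarrow> u \<in> V \<and> v \<in> V" for u v using sg unfolding simple_graph_def by blast
  have other_end: "\<exists>w\<in>V. outp z = Some (ident w) \<and> e = {z, w}" if ez: "e \<in> M" "z \<in> e" for e z
  proof -
    obtain u v where uv: "e = {u, v}" "E u v" "outp u = Some (ident v)"
      using ez(1) unfolding M_def by blast
    then have "z = u \<or> z = v" using ez(2) by blast
    then show ?thesis
      using uv consistent_output_answered[OF sg inj consistent] in_V by (auto simp: insert_commute)
  qed
  have "e \<inter> e' = {}" if ee': "e \<in> M" "e' \<in> M" "e \<noteq> e'" for e e'
  proof (rule ccontr)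
    assume "e \<inter> e' \<noteq> {}"
    then obtain z where z: "z \<in> e" "z \<in> e'" by blast
    obtain w where w: "w \<in> V" "outp z = Some (ident w)" "e = {z, w}"
      using other_end[OF ee'(1) z(1)] by blast
    obtain w' where w': "w' \<in> V" "outp z = Some (ident w')" "e' = {z, w'}"
      using other_end[OF ee'(2) z(2)] by blast
    have "w = w'" using inj_onD[OF inj] w w' by simp
    then have "e = e'" using w(3) w'(3) by simp
    with ee'(3) show False ..
  qed
  moreover have "M \<subseteq> graph_edges E" unfolding M_def graph_edges_def by blast
  ultimately show ?thesis unfolding is_matching_def M_def[symmetric] by blast
qed

lemma solves_maximal_matchingI:
  assumes sg: "simple_graph V E" and inj: "inj_on ident V"
    and consistent: "\<And>v x. v \<in> V \<Longrightarrow> outp v = Some x \<Longrightarrow>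
      \<exists>u. E v u \<and> x = ident u \<and> outp u = Some (ident v)"
    and covering: "\<And>a b. E a b \<Longrightarrow> outp a \<noteq> None \<or> outp b \<noteq> None"
  shows "solves_maximal_matching V E ident outp"
proof -
  define M where "M = {{u, v} | u v. E u v \<and> outp u = Some (ident v)}"
  have in_V: "E u v \<Longrightarrow> u \<in> V \<and> v \<in> V" for u v using sg unfolding simple_graph_def by blast
  have matched: "\<exists>e\<in>M. v \<in> e" if v: "v \<in> V" "outp v \<noteq> None" for v
  proof -
    obtain u where "E v u" "outp v = Some (ident u)" using consistent v by blast
    then have "{v, u} \<in> M" unfolding M_def by blast
    then show ?thesis by blast
  qed
  have maximal: "\<exists>e'\<in>M. e \<inter> e' \<noteq> {}" if e: "e \<in> graph_edges E" for e
  proof -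
    obtain a b where ab: "e = {a, b}" "E a b" using e unfolding graph_edges_def by blast
    have "outp a \<noteq> None \<or> outp b \<noteq> None" using covering[OF ab(2)] .
    then obtain x where x: "x \<in> e" "x \<in> V" "outp x \<noteq> None" using ab in_V by blast
    then show ?thesis using matched by blast
  qed
  have "outp v = None \<or> (\<exists>u. E v u \<and> outp v = Some (ident u) \<and> outp u = Some (ident v))"
    if "v \<in> V" for v
    using consistent[OF that] by (cases "outp v") auto
  then show ?thesis
    using consistent_output_is_matching[OF sg inj consistent] maximal
    unfolding solves_maximal_matching_def is_maximal_matching_def M_def[symmetric] by blast
qed

section \<open>Round complexity\<close>

lemma floor_log_bounds:
  assumes "n \<ge> 1"
  shows "real (floor_log n) \<le> log 2 (real n)" "log 2 (real n) - 1 < real (floor_log n)"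
proof -
  have "real (floor_log n) = of_int \<lfloor>log 2 (real n)\<rfloor>"
    using assms by (simp add: floor_log_altdef)
  then show "real (floor_log n) \<le> log 2 (real n)" "log 2 (real n) - 1 < real (floor_log n)"
    by linarith+
qed

text \<open>With \<open>peel_degree n \<approx> 2 sqrt (log n)\<close> the \<open>O(log n / log log n)\<close> layering rounds
  dominate the \<open>O(sqrt (log n) log log n)\<close> rounds of the matching phase.\<close>
definition peel_exp :: "nat \<Rightarrow> nat" where
  "peel_exp n = max 1 (floor_log (floor_log n) div 2)"

definition peel_degree :: "nat \<Rightarrow> nat" where
  "peel_degree n = 2 ^ (peel_exp n + 1)"

definition num_layers :: "nat \<Rightarrow> nat" where
  "num_layers n = floor_log n div peel_exp n + 1"

definition id_bits :: "nat \<Rightarrow> nat \<Rightarrow> nat" where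
  "id_bits c n = c * (floor_log n + 1)"

definition colour_bits :: "nat \<Rightarrow> nat \<Rightarrow> nat" where
  "colour_bits c n = floor_log (2 * id_bits c n) + 1"

definition num_colours :: "nat \<Rightarrow> nat \<Rightarrow> nat" where
  "num_colours c n = 2 * colour_bits c n"

definition num_rounds :: "nat \<Rightarrow> nat \<Rightarrow> nat" where
  "num_rounds c n = num_layers n + 3 + 3 * (peel_degree n * num_colours c n)"

lemma less_exp_num_layers: "n < 2 ^ (peel_exp n * num_layers n)"
proof -
  define a where "a = peel_exp n"
  have "0 < a" unfolding a_def peel_exp_def by simp
  then have "floor_log n < floor_log n div a * a + a"
    using div_mult_mod_eq[of "floor_log n" a] mod_less_divisor[of a "floor_log n"] by linarith
  then have "(2::nat) ^ (floor_log n + 1) \<le> 2 ^ (a * num_layers n)"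
    unfolding num_layers_def a_def[symmetric] by (intro power_increasing) (auto simp: algebra_simps)
  then show ?thesis using floor_log_exp2_gt[of n] unfolding a_def by simp
qed

lemma floor_log_ge_10: "1024 \<le> n \<Longrightarrow> 10 \<le> floor_log n"
  using floor_log_le_iff[of 1024 n] floor_log_power[of 10] by simp

lemma peel_exp_eq:
  assumes "1024 \<le> n" shows "peel_exp n = floor_log (floor_log n) div 2"
proof -
  have "3 \<le> floor_log (floor_log n)"
    using floor_log_le_iff[of 8 "floor_log n"] floor_log_ge_10[OF assms] floor_log_power[of 3]
    by simp
  then show ?thesis unfolding peel_exp_def by simp
qed

lemma peel_exp_lower:
  assumes "1024 \<le> n" shows "(log 2 (log 2 (real n)) - 3) / 2 \<le> real (peel_exp n)"
proof -
  define l where "l = floor_log n"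
  have l: "real l \<le> log 2 (real n)" "log 2 (real n) - 1 < real l" "10 \<le> l"
    using floor_log_bounds[of n] floor_log_ge_10[OF assms] assms unfolding l_def by auto
  have "log 2 (log 2 (real n)) - 1 = log 2 (log 2 (real n) / 2)"
    using l by (simp add: log_divide)
  also have "\<dots> \<le> log 2 (real l)" using l by (subst log_le_cancel_iff) auto
  also have "\<dots> < real (floor_log l) + 1" using floor_log_bounds(2)[of l] l by simp
  finally have "log 2 (log 2 (real n)) - 3 \<le> real (floor_log l) - 1" by simp
  also have "\<dots> \<le> 2 * real (floor_log l div 2)" by linarith
  finally show ?thesis using peel_exp_eq[OF assms] unfolding l_def by simp
qed

lemma exp_peel_exp_le:
  assumes "1024 \<le> n" shows "2 ^ (2 * peel_exp n) \<le> floor_log n"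
proof -
  have "(2::nat) ^ (2 * peel_exp n) \<le> 2 ^ floor_log (floor_log n)"
    using peel_exp_eq[OF assms] by (intro power_increasing) auto
  also have "\<dots> \<le> floor_log n" using floor_log_exp2_le floor_log_ge_10[OF assms] by simp
  finally show ?thesis .
qed

lemma num_layers_le:
  assumes "1024 \<le> n"
  shows "real (num_layers n) \<le> log 2 (real n) / ((log 2 (log 2 (real n)) - 3) / 2) + 1"
proof -
  have L: "10 \<le> log 2 (real n)"
    using floor_log_bounds(1)[of n] floor_log_ge_10[OF assms] assms by simp
  have "log 2 8 < log 2 (log 2 (real n))" using L by (subst log_less_cancel_iff) auto
  moreover have "log 2 (8::real) = 3" using log_pow_cancel[of 2 3] by simp
  ultimately have pos: "0 < (log 2 (log 2 (real n)) - 3) / 2" by simp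
  have "real (floor_log n div peel_exp n) \<le> real (floor_log n) / real (peel_exp n)"
    by (rule of_nat_div_le_of_nat)
  also have "\<dots> \<le> log 2 (real n) / real (peel_exp n)"
    using floor_log_bounds(1)[of n] assms by (intro divide_right_mono) auto
  also have "\<dots> \<le> log 2 (real n) / ((log 2 (log 2 (real n)) - 3) / 2)"
    using peel_exp_lower[OF assms] pos L by (intro divide_left_mono) auto
  finally show ?thesis unfolding num_layers_def by simp
qed

lemma peel_degree_le:
  assumes "1024 \<le> n" shows "real (peel_degree n) \<le> 2 * sqrt (log 2 (real n))"
proof -
  have "real ((2::nat) ^ peel_exp n) ^ 2 = real (2 ^ (2 * peel_exp n))"
    by (simp add: power_mult[symmetric] mult.commute)
  also have "\<dots> \<le> log 2 (real n)"
    using exp_peel_exp_le[OF assms] floor_log_bounds(1)[of n] assms by linarith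
  finally have "real ((2::nat) ^ peel_exp n) \<le> sqrt (log 2 (real n))" by (rule real_le_rsqrt)
  then show ?thesis unfolding peel_degree_def by simp
qed

lemma num_colours_le:
  assumes "1 \<le> c" "1 \<le> n"
  shows "real (num_colours c n) \<le> 2 * log 2 (2 * real c) + 2 + 2 * log 2 (log 2 (real n) + 1)"
proof -
  have "real (floor_log (2 * id_bits c n)) \<le> log 2 (real (2 * id_bits c n))"
    using floor_log_bounds(1)[of "2 * id_bits c n"] assms(1) unfolding id_bits_def by simp
  also have "real (2 * id_bits c n) = (2 * real c) * (real (floor_log n) + 1)"
    unfolding id_bits_def by (simp add: algebra_simps)
  also have "log 2 \<dots> = log 2 (2 * real c) + log 2 (real (floor_log n) + 1)"
    using assms(1) by (intro log_mult_pos) auto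
  also have "\<dots> \<le> log 2 (2 * real c) + log 2 (log 2 (real n) + 1)"
    using floor_log_bounds(1)[OF assms(2)] by simp
  finally show ?thesis unfolding num_colours_def colour_bits_def by simp
qed

lemma num_rounds_bigo:
  assumes "1 \<le> c"
  shows "(\<lambda>n. real (num_rounds c n)) \<in> O(\<lambda>n. ln (real n) / ln (ln (real n)))"
proof -
  let ?g = "\<lambda>n::nat. ln (real n) / ln (ln (real n))"
  have "(\<lambda>n. real (num_layers n)) \<in> O(\<lambda>n. log 2 (real n) / ((log 2 (log 2 (real n)) - 3) / 2) + 1)"
    using num_layers_le by (intro landau_o.big_mono eventually_at_top_linorderI[of 1024]) force
  also have "(\<lambda>n::nat. log 2 (real n) / ((log 2 (log 2 (real n)) - 3) / 2) + 1) \<in> O(?g)"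
    by real_asymp
  finally have layers: "(\<lambda>n. real (num_layers n)) \<in> O(?g)" .
  have "(\<lambda>n. real (peel_degree n)) \<in> O(\<lambda>n. 2 * sqrt (log 2 (real n)))"
    using peel_degree_le by (intro landau_o.big_mono eventually_at_top_linorderI[of 1024]) force
  moreover have "(\<lambda>n. real (num_colours c n))
      \<in> O(\<lambda>n. 2 * log 2 (2 * real c) + 2 + 2 * log 2 (log 2 (real n) + 1))"
  proof (intro landau_o.big_mono eventually_at_top_linorderI[of 1])
    fix n :: nat assume "1 \<le> n"
    moreover have "0 \<le> log 2 (2 * real c)" using assms by simp
    moreover have "0 \<le> log 2 (real n)" using \<open>1 \<le> n\<close> by simp
    then have "0 \<le> log 2 (log 2 (real n) + 1)" by simp
    ultimately show "norm (real (num_colours c n))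
        \<le> norm (2 * log 2 (2 * real c) + 2 + 2 * log 2 (log 2 (real n) + 1))"
      using num_colours_le[OF assms] by simp
  qed
  ultimately have "(\<lambda>n. real (peel_degree n * num_colours c n)) \<in> O(\<lambda>n.
      2 * sqrt (log 2 (real n)) * (2 * log 2 (2 * real c) + 2 + 2 * log 2 (log 2 (real n) + 1)))"
    unfolding of_nat_mult by (rule landau_o.big_mult)
  also have "(\<lambda>n::nat. 2 * sqrt (log 2 (real n)) *
      (2 * log 2 (2 * real c) + 2 + 2 * log 2 (log 2 (real n) + 1))) \<in> O(?g)"
    by real_asymp
  finally have matching: "(\<lambda>n. real (peel_degree n * num_colours c n)) \<in> O(?g)" .
  have "(\<lambda>n::nat. 3 :: real) \<in> O(?g)" by real_asymp
  then show ?thesis unfolding num_rounds_def of_nat_add of_nat_mult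
    using layers matching by (intro sum_in_bigo) auto
qed

section \<open>The algorithm\<close>

datatype node_state = Node_State
  (st_id: nat) (st_layer: "nat option") (st_out: "nat list")
  (st_colour1: "nat list") (st_colour2: "nat list")
  (st_proposal: "nat option") (st_partner: "nat option")

instance node_state :: countable by countable_datatype

definition lookup_id :: "node_state multiset \<Rightarrow> nat \<Rightarrow> node_state" where
  "lookup_id M x = (SOME m. m \<in># M \<and> st_id m = x)"

text \<open>Labels \<open>i \<ge> k\<close> carry no out-edge of the vertex, which is then a root of that forest
  and takes \<open>own i mod 2\<close>; no child can take this colour by \<open>cole_vishkin_neq_mod2\<close>.\<close>
definition cole_vishkin_round :: "nat \<Rightarrow> nat \<Rightarrow> (nat \<Rightarrow> nat) \<Rightarrow> (nat \<Rightarrow> nat) \<Rightarrow> nat list" where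
  "cole_vishkin_round d k own parent =
     map (\<lambda>i. if i < k then cole_vishkin (own i) (parent i) else own i mod 2) [0..<d]"

lemma cole_vishkin_round_cong:
  "d = d' \<Longrightarrow> k = k' \<Longrightarrow> (\<And>i. i < d' \<Longrightarrow> own i = own' i) \<Longrightarrow>
    (\<And>i. i < k' \<Longrightarrow> parent i = parent' i) \<Longrightarrow>
    cole_vishkin_round d k own parent = cole_vishkin_round d' k' own' parent'"
  unfolding cole_vishkin_round_def by simp

definition matching_round :: "nat \<Rightarrow> nat \<Rightarrow> nat \<Rightarrow> bool" where
  "matching_round c n t \<longleftrightarrow> num_layers n + 3 \<le> t \<and> t < num_rounds c n"

definition phase :: "nat \<Rightarrow> nat \<Rightarrow> nat" where
  "phase n t = (t - (num_layers n + 3)) mod 3"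

definition matching_class :: "nat \<Rightarrow> nat \<Rightarrow> nat" where
  "matching_class n t = (t - (num_layers n + 3)) div 3"

definition init_state :: "nat \<Rightarrow> nat \<Rightarrow> node_state" where
  "init_state n x = Node_State x None [] [] [] None None"

definition propose :: "nat \<Rightarrow> nat \<Rightarrow> nat \<Rightarrow> node_state \<Rightarrow> node_state multiset \<Rightarrow> nat option" where
  "propose c n k s M =
     (let i = k div num_colours c n in
      if st_partner s = None \<and> i < length (st_out s) \<and> st_colour2 s ! i = k mod num_colours c n
         \<and> st_partner (lookup_id M (st_out s ! i)) = None
      then Some (st_out s ! i) else None)"

text \<open>The schedule: rounds \<open>t < num_layers n\<close> compute the layers of an H-partition, round
  \<open>num_layers n\<close> orients every edge towards the larger (layer, identifier) pair, the next two
  rounds are Cole--Vishkin steps colouring the out-edges of each label, and then every class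
  \<open>k\<close> of out-edges (label \<open>k div num_colours c n\<close>, colour \<open>k mod num_colours c n\<close>)
  takes three rounds: propose along the edge, accept the least proposer, confirm.\<close>
definition step :: "nat \<Rightarrow> nat \<Rightarrow> nat \<Rightarrow> node_state \<Rightarrow> node_state multiset \<Rightarrow> node_state" where
  "step c n t s M = Node_State (st_id s)
     (if t < num_layers n \<and> st_layer s = None
         \<and> size (filter_mset (\<lambda>m. st_layer m = None) M) \<le> peel_degree n
      then Some t else st_layer s)
     (if t = num_layers n
      then sorted_list_of_set
        {st_id m | m. m \<in># M \<and> (the (st_layer s), st_id s) < (the (st_layer m), st_id m)}
      else st_out s)
     (if t = num_layers n + 1
      then cole_vishkin_round (peel_degree n) (length (st_out s)) (\<lambda>_. st_id s) (\<lambda>i. st_out s ! i)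
      else st_colour1 s)
     (if t = num_layers n + 2
      then cole_vishkin_round (peel_degree n) (length (st_out s)) (\<lambda>i. st_colour1 s ! i)
        (\<lambda>i. st_colour1 (lookup_id M (st_out s ! i)) ! i)
      else st_colour2 s)
     (if matching_round c n t
      then (if phase n t = 0 then propose c n (matching_class n t) s M
            else if phase n t = 1 then st_proposal s else None)
      else st_proposal s)
     (if matching_round c n t \<and> phase n t = 1 \<and> st_partner s = None \<and> st_proposal s = None
         \<and> (\<exists>m\<in>#M. st_proposal m = Some (st_id s))
      then Some (Min {st_id m | m. m \<in># M \<and> st_proposal m = Some (st_id s)})
      else if matching_round c n t \<and> phase n t = 2 \<and> st_partner s = None
         \<and> (\<exists>x. st_proposal s = Some x \<and> st_partner (lookup_id M x) = Some (st_id s))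
      then st_proposal s
      else st_partner s)"

lemma step_propose:
  "matching_round c n t \<Longrightarrow> phase n t = 0 \<Longrightarrow>
    st_proposal (step c n t s M) = propose c n (matching_class n t) s M \<and>
    st_partner (step c n t s M) = st_partner s"
  by (simp add: step_def)

lemma step_accept:
  "matching_round c n t \<Longrightarrow> phase n t = 1 \<Longrightarrow>
    st_proposal (step c n t s M) = st_proposal s \<and>
    st_partner (step c n t s M) =
      (if st_partner s = None \<and> st_proposal s = None \<and> (\<exists>m\<in>#M. st_proposal m = Some (st_id s))
       then Some (Min {st_id m | m. m \<in># M \<and> st_proposal m = Some (st_id s)})
       else st_partner s)"
  by (simp add: step_def)

lemma step_confirm:
  "matching_round c n t \<Longrightarrow> phase n t = 2 \<Longrightarrow>
    st_partner (step c n t s M) =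
      (if st_partner s = None
          \<and> (\<exists>x. st_proposal s = Some x \<and> st_partner (lookup_id M x) = Some (st_id s))
       then st_proposal s else st_partner s)"
  by (simp add: step_def)

locale tree_run =
  fixes V :: "nat set" and E :: "nat \<Rightarrow> nat \<Rightarrow> bool" and ident :: "nat \<Rightarrow> nat" and c :: nat
  assumes tree: "is_tree V E" and ids: "valid_ids c V ident" and c_pos: "1 \<le> c"
begin

abbreviation "n \<equiv> card V"

definition state :: "nat \<Rightarrow> nat \<Rightarrow> node_state" where
  "state = local_run init_state (step c) V E ident"

definition nbrs :: "nat \<Rightarrow> nat set" where
  "nbrs v = {u\<in>V. E v u}"

abbreviation "inbox t v \<equiv> image_mset (state t) (mset_set (nbrs v))"

lemma simple: "simple_graph V E" and acyclic: "graph_acyclic V E"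
  using tree unfolding is_tree_def by auto

lemma finite_V: "finite V"
  using simple unfolding simple_graph_def by auto

lemma edge_in_V: "E u v \<Longrightarrow> u \<in> V \<and> v \<in> V"
  and edge_sym: "E u v \<Longrightarrow> E v u"
  and edge_irrefl: "E u v \<Longrightarrow> u \<noteq> v"
  using simple unfolding simple_graph_def by auto

lemma inj_ident: "inj_on ident V"
  using ids unfolding valid_ids_def by auto

lemma ident_le: "v \<in> V \<Longrightarrow> ident v \<le> n ^ c"
  using ids unfolding valid_ids_def by auto

lemma ident_neq_edge: "E u v \<Longrightarrow> ident u \<noteq> ident v"
  using inj_ident edge_in_V edge_irrefl unfolding inj_on_def by metis

lemma nbrs_iff: "u \<in> nbrs v \<longleftrightarrow> u \<in> V \<and> E v u"
  unfolding nbrs_def by simp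

lemma finite_nbrs: "finite (nbrs v)"
  unfolding nbrs_def using finite_V by simp

lemma state_0: "state 0 v = init_state n (ident v)"
  by (simp add: state_def)

lemma state_Suc: "state (Suc t) v = step c n t (state t v) (inbox t v)"
  by (simp add: state_def nbrs_def)

lemma st_id_state [simp]: "st_id (state t v) = ident v"
  by (induction t) (simp_all add: state_0 init_state_def step_def state_Suc)

lemma set_inbox: "set_mset (inbox t v) = state t ` nbrs v"
  using finite_nbrs by simp

lemma lookup_inbox:
  assumes "u \<in> nbrs v" shows "lookup_id (inbox t v) (ident u) = state t u"
proof -
  have unique: "m = state t u" if m: "m \<in># inbox t v" "st_id m = ident u" for m
  proof -
    obtain w where w: "w \<in> nbrs v" "m = state t w" using m(1) set_inbox by auto
    then have "ident w = ident u" using m(2) by simp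
    then have "w = u" using inj_onD[OF inj_ident] w(1) assms unfolding nbrs_def by blast
    then show ?thesis using w(2) by simp
  qed
  have "\<exists>m. m \<in># inbox t v \<and> st_id m = ident u" using assms set_inbox by auto
  from someI_ex[OF this] show ?thesis unfolding lookup_id_def using unique by blast
qed

lemma size_filter_inbox: "size (filter_mset P (inbox t v)) = card {u\<in>nbrs v. P (state t u)}"
  using finite_nbrs by (simp add: filter_mset_image_mset)

lemma st_ids_inbox: "{st_id m | m. m \<in># inbox t v \<and> P m} = ident ` {u\<in>nbrs v. P (state t u)}"
proof (rule set_eqI, rule iffI)
  fix x assume "x \<in> {st_id m | m. m \<in># inbox t v \<and> P m}"
  then show "x \<in> ident ` {u\<in>nbrs v. P (state t u)}" using set_inbox by auto
next
  fix x assume "x \<in> ident ` {u\<in>nbrs v. P (state t u)}"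
  then obtain u where u: "u \<in> nbrs v" "P (state t u)" "x = ident u" by auto
  then have "state t u \<in># inbox t v" using set_inbox by auto
  then show "x \<in> {st_id m | m. m \<in># inbox t v \<and> P m}"
    using u by (intro CollectI exI[of _ "state t u"]) auto
qed

subsection \<open>Layers\<close>

text \<open>The H-partition of Barenboim and Elkin: in round \<open>r\<close> the active vertices with at most
  \<open>peel_degree n\<close> active neighbours leave and form layer \<open>r\<close>; by
  \<open>acyclic_card_high_degree\<close> each round divides the number of active vertices by
  \<open>2 ^ peel_exp n\<close>.\<close>
primrec active :: "nat \<Rightarrow> nat set" where
  "active 0 = V"
| "active (Suc r) = {v\<in>active r. peel_degree n < degree_in E (active r) v}"

lemma active_subset: "active r \<subseteq> V"
  by (induction r) auto

lemma active_antimono: "r1 \<le> r2 \<Longrightarrow> active r2 \<subseteq> active r1"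
  by (induction r2 rule: dec_induct) auto

lemma card_active_Suc: "card (active (Suc r)) * 2 ^ peel_exp n \<le> card (active r)"
proof -
  have "card (active (Suc r)) * (2 * 2 ^ peel_exp n) \<le> card (active (Suc r)) * (peel_degree n + 1)"
    unfolding peel_degree_def by simp
  also have "\<dots> \<le> 2 * card (active r)"
    using acyclic_card_high_degree[OF simple acyclic active_subset[of r]] by simp
  finally show ?thesis by simp
qed

lemma card_active: "card (active r) * 2 ^ (peel_exp n * r) \<le> n"
proof (induction r)
  case (Suc r)
  have "card (active (Suc r)) * 2 ^ (peel_exp n * Suc r)
      = card (active (Suc r)) * 2 ^ peel_exp n * 2 ^ (peel_exp n * r)"
    by (simp add: power_add)
  also have "\<dots> \<le> card (active r) * 2 ^ (peel_exp n * r)"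
    using card_active_Suc by simp
  finally show ?case using Suc.IH by simp
qed simp

lemma active_num_layers: "active (num_layers n) = {}"
proof -
  have "card (active (num_layers n)) * 2 ^ (peel_exp n * num_layers n)
      < 2 ^ (peel_exp n * num_layers n)"
    using card_active[of "num_layers n"] less_exp_num_layers[of n] by linarith
  then have "card (active (num_layers n)) = 0" by simp
  then show ?thesis using finite_subset[OF active_subset finite_V] by simp
qed

definition layer :: "nat \<Rightarrow> nat" where
  "layer v = (LEAST r. v \<notin> active (Suc r))"

lemma not_active_num_layers: "v \<notin> active (Suc (num_layers n - 1))"
  using active_num_layers unfolding num_layers_def by simp

lemma layer_less: "layer v < num_layers n"
proof -
  have "layer v \<le> num_layers n - 1"
    unfolding layer_def using not_active_num_layers by (rule Least_le)
  then show ?thesis unfolding num_layers_def by simp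
qed

lemma active_iff: assumes "v \<in> V" shows "v \<in> active r \<longleftrightarrow> r \<le> layer v"
proof
  assume "v \<in> active r"
  have "v \<notin> active (Suc (layer v))"
    unfolding layer_def by (rule LeastI_ex) (use not_active_num_layers in blast)
  then show "r \<le> layer v"
    using \<open>v \<in> active r\<close> active_antimono[of "Suc (layer v)" r] by (metis in_mono not_less_eq_eq)
next
  assume "r \<le> layer v"
  then show "v \<in> active r"
  proof (cases r)
    case (Suc r')
    then have "r' < layer v" using \<open>r \<le> layer v\<close> by simp
    then show ?thesis unfolding layer_def Suc by (metis not_less_Least)
  qed (simp add: assms)
qed

lemma degree_in_active_inbox:
  assumes "\<And>u. u \<in> V \<Longrightarrow> st_layer (state t u) = None \<longleftrightarrow> u \<in> active t"
  shows "size (filter_mset (\<lambda>m. st_layer m = None) (inbox t v)) = degree_in E (active t) v"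
proof -
  have "{u\<in>nbrs v. st_layer (state t u) = None} = {u\<in>active t. E v u}"
    using assms active_subset[of t] unfolding nbrs_def by blast
  then show ?thesis unfolding size_filter_inbox degree_in_def by simp
qed

lemma st_layer_state:
  "t \<le> num_layers n \<Longrightarrow> v \<in> V \<Longrightarrow>
    st_layer (state t v) = (if v \<in> active t then None else Some (layer v))"
proof (induction t arbitrary: v)
  case 0 then show ?case by (simp add: state_0 init_state_def)
next
  case (Suc t)
  have IH: "u \<in> V \<Longrightarrow> st_layer (state t u) = (if u \<in> active t then None else Some (layer u))" for u
    using Suc by simp
  note degree = degree_in_active_inbox[of t v]
  consider "v \<notin> active t" | "v \<in> active (Suc t)" | "v \<in> active t" "v \<notin> active (Suc t)"
    by blast
  then show ?case
  proof cases
    case 3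
    then have "layer v = t" using active_iff[OF Suc.prems(2)] by (metis le_antisym not_less_eq_eq)
    then show ?thesis using 3 IH[OF Suc.prems(2)] degree IH Suc.prems(1)
      by (auto simp: state_Suc step_def)
  qed (use IH[OF Suc.prems(2)] degree IH in \<open>auto simp: state_Suc step_def\<close>)
qed

lemma st_layer_final: "num_layers n \<le> t \<Longrightarrow> v \<in> V \<Longrightarrow> st_layer (state t v) = Some (layer v)"
proof (induction t rule: dec_induct)
  case base then show ?case using st_layer_state[of "num_layers n" v] active_num_layers by simp
qed (simp add: state_Suc step_def)

subsection \<open>Orientation and colouring of the out-edges\<close>

definition out_nbrs :: "nat \<Rightarrow> nat set" where
  "out_nbrs v = {u\<in>nbrs v. (layer v, ident v) < (layer u, ident u)}"

definition out_ids :: "nat \<Rightarrow> nat list" where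
  "out_ids v = sorted_list_of_set (ident ` out_nbrs v)"

definition out_nbr :: "nat \<Rightarrow> nat \<Rightarrow> nat" where
  "out_nbr v i = (SOME u. u \<in> out_nbrs v \<and> ident u = out_ids v ! i)"

lemma finite_out_nbrs: "finite (out_nbrs v)"
  unfolding out_nbrs_def using finite_nbrs by simp

lemma set_out_ids: "set (out_ids v) = ident ` out_nbrs v"
  unfolding out_ids_def using finite_out_nbrs by simp

lemma out_nbr_spec:
  assumes "i < length (out_ids v)"
  shows "out_nbr v i \<in> out_nbrs v" "ident (out_nbr v i) = out_ids v ! i"
proof -
  have "\<exists>u. u \<in> out_nbrs v \<and> ident u = out_ids v ! i"
    using nth_mem[OF assms] set_out_ids by auto
  from someI_ex[OF this] show "out_nbr v i \<in> out_nbrs v" "ident (out_nbr v i) = out_ids v ! i"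
    unfolding out_nbr_def by auto
qed

lemma out_nbr_edge: "i < length (out_ids v) \<Longrightarrow> out_nbr v i \<in> V \<and> E v (out_nbr v i)"
  using out_nbr_spec(1) unfolding out_nbrs_def nbrs_def by blast

lemma out_nbr_index:
  assumes "u \<in> out_nbrs v" obtains i where "i < length (out_ids v)" "out_nbr v i = u"
proof -
  obtain i where i: "i < length (out_ids v)" "out_ids v ! i = ident u"
    using assms set_out_ids by (metis imageI in_set_conv_nth)
  have "u \<in> V" using assms unfolding out_nbrs_def nbrs_def by simp
  then have "out_nbr v i = u"
    using inj_onD[OF inj_ident] out_nbr_spec[OF i(1)] out_nbr_edge[OF i(1)] i(2) by simp
  with i(1) show ?thesis using that by blast
qed

lemma edge_oriented: "E a b \<Longrightarrow> b \<in> out_nbrs a \<or> a \<in> out_nbrs b"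
  using ident_neq_edge[of a b] edge_in_V edge_sym
  unfolding out_nbrs_def nbrs_def by (auto simp: neq_iff)

text \<open>Out-neighbours are still active in the round where \<open>v\<close> leaves, so there are at most
  \<open>peel_degree n\<close> of them.\<close>
lemma length_out_ids_le: assumes "v \<in> V" shows "length (out_ids v) \<le> peel_degree n"
proof -
  have "length (out_ids v) = card (out_nbrs v)"
    unfolding out_ids_def using finite_out_nbrs inj_onD[OF inj_ident]
    by (simp add: card_image inj_on_def out_nbrs_def nbrs_def)
  also have "\<dots> \<le> degree_in E (active (layer v)) v"
    unfolding degree_in_def using finite_subset[OF active_subset finite_V] active_iff
    by (intro card_mono) (auto simp: out_nbrs_def nbrs_def less_prod_def)
  also have "\<dots> \<le> peel_degree n"
    using active_iff[OF assms, of "layer v"] active_iff[OF assms, of "Suc (layer v)"] by auto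
  finally show ?thesis .
qed

lemma st_out_state:
  assumes "num_layers n + 1 \<le> t" "v \<in> V" shows "st_out (state t v) = out_ids v"
  using assms(1)
proof (induction t rule: dec_induct)
  case base
  have "st_layer (state (num_layers n) u) = Some (layer u)" if "u \<in> nbrs v" for u
    using st_layer_final that unfolding nbrs_def by blast
  then have "{st_id m | m. m \<in># inbox (num_layers n) v \<and>
      (the (st_layer (state (num_layers n) v)), ident v) < (the (st_layer m), st_id m)}
    = ident ` out_nbrs v"
    unfolding st_ids_inbox out_nbrs_def using st_layer_final[OF le_refl assms(2)]
    by (intro arg_cong[where f = "image ident"] Collect_cong) auto
  then show ?case by (simp add: state_Suc step_def out_ids_def)
qed (simp add: state_Suc step_def)

text \<open>For each label \<open>i\<close> the out-edges labelled \<open>i\<close> form a rooted forest (each vertex has at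
  most one of them); a labelling \<open>col v i\<close> colours vertex \<open>v\<close> in the forest of label \<open>i\<close>.\<close>
definition proper_labelling :: "(nat \<Rightarrow> nat \<Rightarrow> nat) \<Rightarrow> bool" where
  "proper_labelling col \<longleftrightarrow> (\<forall>v\<in>V. \<forall>i<length (out_ids v). col v i \<noteq> col (out_nbr v i) i)"

definition reduce_colours :: "(nat \<Rightarrow> nat \<Rightarrow> nat) \<Rightarrow> nat \<Rightarrow> nat list" where
  "reduce_colours col v =
     cole_vishkin_round (peel_degree n) (length (out_ids v)) (col v) (\<lambda>i. col (out_nbr v i) i)"

lemma nth_reduce_colours:
  "i < peel_degree n \<Longrightarrow> reduce_colours col v ! i =
    (if i < length (out_ids v) then cole_vishkin (col v i) (col (out_nbr v i) i)
     else col v i mod 2)"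
  unfolding reduce_colours_def cole_vishkin_round_def by simp

lemma proper_reduce_colours:
  assumes "proper_labelling col" shows "proper_labelling (\<lambda>v i. reduce_colours col v ! i)"
  unfolding proper_labelling_def
proof (intro ballI allI impI)
  fix v i assume v: "v \<in> V" and i: "i < length (out_ids v)"
  define p where "p = out_nbr v i"
  have d: "i < peel_degree n" using length_out_ids_le[OF v] i by simp
  have p: "p \<in> V" "col v i \<noteq> col p i"
    using out_nbr_edge[OF i] assms v i unfolding p_def proper_labelling_def by auto
  show "reduce_colours col v ! i \<noteq> reduce_colours col (out_nbr v i) ! i"
  proof (cases "i < length (out_ids p)")
    case True
    then have "col p i \<noteq> col (out_nbr p i) i"
      using assms p(1) unfolding proper_labelling_def by blast
    then show ?thesis
      using cole_vishkin_neq[OF p(2)] True d i unfolding p_def by (simp add: nth_reduce_colours)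
  next
    case False
    then show ?thesis
      using cole_vishkin_neq_mod2[OF p(2)] d i unfolding p_def by (simp add: nth_reduce_colours)
  qed
qed

lemma reduce_colours_less:
  assumes "proper_labelling col" "1 \<le> B"
    and "\<And>v i. v \<in> V \<Longrightarrow> i < peel_degree n \<Longrightarrow> col v i < 2 ^ B"
    and "v \<in> V" "i < peel_degree n"
  shows "reduce_colours col v ! i < 2 * B"
proof (cases "i < length (out_ids v)")
  case True
  then show ?thesis using cole_vishkin_less assms out_nbr_edge[OF True]
    unfolding proper_labelling_def by (simp add: nth_reduce_colours)
next
  case False
  then show ?thesis using assms(2,5) by (simp add: nth_reduce_colours)
qed

definition colour1 :: "nat \<Rightarrow> nat list" where
  "colour1 = reduce_colours (\<lambda>v _. ident v)"

definition colour2 :: "nat \<Rightarrow> nat list" where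
  "colour2 = reduce_colours (\<lambda>v i. colour1 v ! i)"

lemma proper_ident: "proper_labelling (\<lambda>v _. ident v)"
  unfolding proper_labelling_def using out_nbr_edge ident_neq_edge by blast

lemma proper_colour1: "proper_labelling (\<lambda>v i. colour1 v ! i)"
  unfolding colour1_def by (rule proper_reduce_colours[OF proper_ident])

lemma proper_colour2: "proper_labelling (\<lambda>v i. colour2 v ! i)"
  unfolding colour2_def by (rule proper_reduce_colours[OF proper_colour1])

lemma ident_less: assumes "v \<in> V" shows "ident v < 2 ^ id_bits c n"
proof -
  have "n ^ c < (2 ^ (floor_log n + 1)) ^ c"
    using floor_log_exp2_gt[of n] c_pos by (intro power_strict_mono) auto
  also have "\<dots> = 2 ^ id_bits c n"
    unfolding id_bits_def by (simp only: power_mult[symmetric] mult.commute)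
  finally show ?thesis using ident_le[OF assms] by linarith
qed

lemma colour2_less:
  assumes "v \<in> V" "i < peel_degree n" shows "colour2 v ! i < num_colours c n"
proof -
  have "1 \<le> id_bits c n" unfolding id_bits_def using c_pos by simp
  then have "colour1 u ! j < 2 * id_bits c n" if "u \<in> V" "j < peel_degree n" for u j
    unfolding colour1_def using reduce_colours_less[OF proper_ident _ ident_less] that by blast
  moreover have "2 * id_bits c n < 2 ^ colour_bits c n"
    unfolding colour_bits_def using floor_log_exp2_gt[of "2 * id_bits c n"] by simp
  ultimately have "colour1 u ! j < 2 ^ colour_bits c n" if "u \<in> V" "j < peel_degree n" for u j
    using that by (meson less_trans)
  from reduce_colours_less[OF proper_colour1 _ this assms] show ?thesis
    unfolding colour2_def num_colours_def colour_bits_def by simp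
qed

lemma st_colour1_state:
  assumes "num_layers n + 2 \<le> t" "v \<in> V" shows "st_colour1 (state t v) = colour1 v"
  using assms(1)
proof (induction t rule: dec_induct)
  case base
  have "st_out (state (num_layers n + 1) v) = out_ids v" using st_out_state[OF le_refl assms(2)] .
  then show ?case unfolding colour1_def reduce_colours_def numeral_2_eq_2
    by (simp add: state_Suc step_def out_nbr_spec(2) cong: cole_vishkin_round_cong)
qed (simp add: state_Suc step_def)

lemma st_colour2_state:
  assumes "num_layers n + 3 \<le> t" "v \<in> V" shows "st_colour2 (state t v) = colour2 v"
  using assms(1)
proof (induction t rule: dec_induct)
  case base
  have "st_colour1 (lookup_id (inbox (num_layers n + 2) v) (out_ids v ! i)) = colour1 (out_nbr v i)"
    if "i < length (out_ids v)" for i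
    using lookup_inbox[of "out_nbr v i" v] out_nbr_spec[OF that] out_nbr_edge[OF that]
      st_colour1_state[OF le_refl] by (simp add: nbrs_def)
  then show ?case
    using st_out_state[of "num_layers n + 2" v] st_colour1_state[OF le_refl assms(2)] assms(2)
    unfolding colour2_def reduce_colours_def numeral_3_eq_3
    by (simp add: state_Suc[of "Suc (Suc (num_layers n))"] step_def cong: cole_vishkin_round_cong)
qed (simp add: state_Suc step_def)

subsection \<open>Matching phase\<close>

abbreviation "partner t v \<equiv> st_partner (state t v)"
abbreviation "proposal t v \<equiv> st_proposal (state t v)"
abbreviation "num_classes \<equiv> peel_degree n * num_colours c n"

definition class_start :: "nat \<Rightarrow> nat" where
  "class_start k = num_layers n + 3 + 3 * k"

lemma class_start_Suc: "class_start (Suc k) = Suc (Suc (Suc (class_start k)))"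
  unfolding class_start_def by simp

lemma num_rounds_class_start: "num_rounds c n = class_start num_classes"
  unfolding num_rounds_def class_start_def by simp

lemma partner_mono: "t \<le> t' \<Longrightarrow> partner t v = Some x \<Longrightarrow> partner t' v = Some x"
  by (induction t' rule: dec_induct) (auto simp: state_Suc step_def)

lemma partner_mono_ne: "t \<le> t' \<Longrightarrow> partner t v \<noteq> None \<Longrightarrow> partner t' v \<noteq> None"
  using partner_mono by blast

lemma before_matching: "t \<le> num_layers n + 3 \<Longrightarrow> partner t v = None"
  by (induction t) (auto simp: state_0 init_state_def state_Suc step_def matching_round_def)

lemma class_rounds:
  assumes "k < num_classes" "r < 3"
  shows "matching_round c n (class_start k + r)" "phase n (class_start k + r) = r"
    "matching_class n (class_start k + r) = k"
proof -
  have "class_start k + r - (num_layers n + 3) = 3 * k + r" unfolding class_start_def by simp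
  then show "matching_round c n (class_start k + r)" "phase n (class_start k + r) = r"
    "matching_class n (class_start k + r) = k"
    using assms
    unfolding matching_round_def phase_def matching_class_def class_start_def num_rounds_def
    by auto
qed

text \<open>As \<open>colour2\<close> is proper, a vertex proposing in class \<open>k\<close> receives no proposal in
  class \<open>k\<close>, so accepting the least proposer never conflicts with an own proposal.\<close>
definition proposes :: "nat \<Rightarrow> nat \<Rightarrow> bool" where
  "proposes k v \<longleftrightarrow> partner (class_start k) v = None \<and> k div num_colours c n < length (out_ids v)
     \<and> colour2 v ! (k div num_colours c n) = k mod num_colours c n
     \<and> partner (class_start k) (out_nbr v (k div num_colours c n)) = None"

definition proposers :: "nat \<Rightarrow> nat \<Rightarrow> nat set" where
  "proposers k v = {u\<in>nbrs v. proposal (Suc (class_start k)) u = Some (ident v)}"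

lemma proposal_after_propose:
  assumes "k < num_classes" "v \<in> V"
  shows "proposal (Suc (class_start k)) v =
    (if proposes k v then Some (ident (out_nbr v (k div num_colours c n))) else None)"
proof -
  define i where "i = k div num_colours c n"
  have out: "st_out (state (class_start k) v) = out_ids v"
    using st_out_state[OF _ assms(2)] unfolding class_start_def by simp
  have col: "st_colour2 (state (class_start k) v) = colour2 v"
    using st_colour2_state[OF _ assms(2)] unfolding class_start_def by simp
  have lookup:
    "lookup_id (inbox (class_start k) v) (out_ids v ! i) = state (class_start k) (out_nbr v i)"
    if "i < length (out_ids v)"
  proof -
    have "out_nbr v i \<in> nbrs v" using out_nbr_edge[OF that] by (simp add: nbrs_iff)
    then show ?thesis using lookup_inbox out_nbr_spec(2)[OF that] by metis
  qed
  have "proposal (Suc (class_start k)) v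
      = propose c n k (state (class_start k) v) (inbox (class_start k) v)"
    using class_rounds[OF assms(1), of 0] step_propose by (simp add: state_Suc)
  also have "\<dots> = (if proposes k v then Some (ident (out_nbr v i)) else None)"
    using out col lookup out_nbr_spec(2)
    unfolding propose_def Let_def i_def[symmetric] proposes_def by auto
  finally show ?thesis unfolding i_def .
qed

lemma partner_after_propose:
  "k < num_classes \<Longrightarrow> partner (Suc (class_start k)) v = partner (class_start k) v"
  using class_rounds[of k 0] step_propose by (simp add: state_Suc)

lemma proposal_after_accept:
  "k < num_classes \<Longrightarrow> proposal (Suc (Suc (class_start k))) v = proposal (Suc (class_start k)) v"
  using class_rounds[of k 1] step_accept by (simp add: state_Suc)

lemma partner_after_accept:
  assumes "k < num_classes"
  shows "partner (Suc (Suc (class_start k))) v =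
    (if partner (class_start k) v = None \<and> proposal (Suc (class_start k)) v = None
        \<and> proposers k v \<noteq> {}
     then Some (Min (ident ` proposers k v)) else partner (class_start k) v)"
proof -
  have "(\<exists>m\<in>#inbox (Suc (class_start k)) v. st_proposal m = Some (ident v)) \<longleftrightarrow> proposers k v \<noteq> {}"
    unfolding proposers_def set_inbox by auto
  moreover have "{st_id m | m. m \<in># inbox (Suc (class_start k)) v \<and> st_proposal m = Some (ident v)}
      = ident ` proposers k v"
    unfolding st_ids_inbox proposers_def by simp
  ultimately show ?thesis
    using class_rounds[OF assms, of 1] partner_after_propose[OF assms] step_accept
    by (simp add: state_Suc[of "Suc (class_start k)"])
qed

lemma partner_after_confirm:
  assumes "k < num_classes" "v \<in> V"
  shows "partner (Suc (Suc (Suc (class_start k)))) v =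
    (if partner (Suc (Suc (class_start k))) v = None \<and> proposes k v
       \<and> partner (Suc (Suc (class_start k))) (out_nbr v (k div num_colours c n)) = Some (ident v)
     then Some (ident (out_nbr v (k div num_colours c n)))
     else partner (Suc (Suc (class_start k))) v)"
proof -
  define i where "i = k div num_colours c n"
  have lookup: "lookup_id (inbox (Suc (Suc (class_start k))) v) (ident (out_nbr v i))
      = state (Suc (Suc (class_start k))) (out_nbr v i)" if "proposes k v"
  proof -
    have "i < length (out_ids v)" using that unfolding proposes_def i_def by simp
    then have "out_nbr v i \<in> nbrs v" using out_nbr_edge by (simp add: nbrs_iff)
    then show ?thesis using lookup_inbox by metis
  qed
  show ?thesis
    using class_rounds[OF assms(1), of 2] step_confirm proposal_after_accept[OF assms(1)]
      proposal_after_propose[OF assms] lookup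
    unfolding i_def[symmetric]
    by (auto simp: state_Suc[of "Suc (Suc (class_start k))"] numeral_2_eq_2)
qed

lemma proposer_proposes:
  assumes "k < num_classes" "u \<in> proposers k v"
  shows "proposes k u" "out_nbr u (k div num_colours c n) = v"
proof -
  have u: "u \<in> V" "v \<in> V" "proposal (Suc (class_start k)) u = Some (ident v)"
    using assms(2) edge_in_V unfolding proposers_def nbrs_def by auto
  show "proposes k u" using proposal_after_propose[OF assms(1) u(1)] u(3) by (auto split: if_splits)
  then have "out_nbr u (k div num_colours c n) \<in> V"
    "ident (out_nbr u (k div num_colours c n)) = ident v"
    using out_nbr_edge proposal_after_propose[OF assms(1) u(1)] u(3) unfolding proposes_def by auto
  then show "out_nbr u (k div num_colours c n) = v" using inj_onD[OF inj_ident] u(2) by blast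
qed

definition consistent_partners :: "nat \<Rightarrow> bool" where
  "consistent_partners t \<longleftrightarrow> (\<forall>v\<in>V. \<forall>x. partner t v = Some x \<longrightarrow>
     (\<exists>u. E v u \<and> x = ident u \<and> partner t u = Some (ident v)))"

definition classes_covered :: "nat \<Rightarrow> bool" where
  "classes_covered k \<longleftrightarrow> (\<forall>v\<in>V. \<forall>i<length (out_ids v).
     i * num_colours c n + colour2 v ! i < k \<longrightarrow>
     partner (class_start k) v \<noteq> None \<or> partner (class_start k) (out_nbr v i) \<noteq> None)"

lemma accepted_partner:
  assumes "k < num_classes" "v \<in> V" "partner (class_start k) v = None"
    and "partner (Suc (Suc (class_start k))) v = Some x"
  shows "\<exists>u. E v u \<and> x = ident u \<and> partner (Suc (Suc (Suc (class_start k)))) u = Some (ident v)"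
proof -
  have accept: "proposal (Suc (class_start k)) v = None" "proposers k v \<noteq> {}"
    "x = Min (ident ` proposers k v)"
    using partner_after_accept[OF assms(1), of v] assms(3,4) by (auto split: if_splits)
  have "x \<in> ident ` proposers k v"
    using accept(2,3) finite_subset[of "proposers k v" "nbrs v"] finite_nbrs
    unfolding proposers_def by auto
  then obtain u where u: "u \<in> proposers k v" "x = ident u" by blast
  have "E v u" "u \<in> V" using u(1) unfolding proposers_def nbrs_def by auto
  have u_proposes: "proposes k u" "out_nbr u (k div num_colours c n) = v"
    using proposer_proposes[OF assms(1) u(1)] by auto
  then have "partner (Suc (Suc (class_start k))) u = None"
    using partner_after_accept[OF assms(1), of u] u(1)
    unfolding proposes_def proposers_def by simp
  then have "partner (Suc (Suc (Suc (class_start k)))) u = Some (ident v)"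
    using partner_after_confirm[OF assms(1) \<open>u \<in> V\<close>] u_proposes assms(4) u(2) by simp
  then show ?thesis using \<open>E v u\<close> u(2) by blast
qed

lemma confirmed_partner:
  assumes "k < num_classes" "v \<in> V" "partner (Suc (Suc (class_start k))) v = None"
    and "partner (Suc (Suc (Suc (class_start k)))) v = Some x"
  shows "\<exists>u. E v u \<and> x = ident u \<and> partner (Suc (Suc (Suc (class_start k)))) u = Some (ident v)"
proof -
  define u where "u = out_nbr v (k div num_colours c n)"
  have confirm:
    "proposes k v" "partner (Suc (Suc (class_start k))) u = Some (ident v)" "x = ident u"
    using partner_after_confirm[OF assms(1,2)] assms(3,4) unfolding u_def by (auto split: if_splits)
  then have "E v u" using out_nbr_edge unfolding proposes_def u_def by blast
  moreover have "partner (Suc (Suc (Suc (class_start k)))) u = Some (ident v)"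
    using partner_mono[OF _ confirm(2)] by simp
  ultimately show ?thesis using confirm(3) by blast
qed

lemma consistent_after_class:
  assumes "k < num_classes" "consistent_partners (class_start k)"
  shows "consistent_partners (class_start (Suc k))"
  unfolding consistent_partners_def class_start_Suc
proof (intro ballI allI impI)
  let ?t2 = "Suc (Suc (class_start k))" and ?t3 = "Suc (Suc (Suc (class_start k)))"
  fix v x assume v: "v \<in> V" and x: "partner ?t3 v = Some x"
  show "\<exists>u. E v u \<and> x = ident u \<and> partner ?t3 u = Some (ident v)"
  proof (cases "partner (class_start k) v")
    case (Some y)
    then have "partner ?t3 v = Some y" using partner_mono[of "class_start k" ?t3] by simp
    then obtain u where u: "E v u" "x = ident u" "partner (class_start k) u = Some (ident v)"
      using assms(2) v x Some unfolding consistent_partners_def by auto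
    then have "partner ?t3 u = Some (ident v)" using partner_mono[of "class_start k" ?t3] by simp
    then show ?thesis using u by blast
  next
    case None
    show ?thesis
    proof (cases "partner ?t2 v")
      case (Some y)
      then have "y = x" using x partner_mono[of ?t2 ?t3 v y] by simp
      then show ?thesis using accepted_partner[OF assms(1) v None] Some by blast
    qed (use confirmed_partner[OF assms(1) v _ x] in blast)
  qed
qed

lemma covered_after_class:
  assumes "k < num_classes" "classes_covered k"
  shows "classes_covered (Suc k)"
  unfolding classes_covered_def class_start_Suc
proof (intro ballI allI impI)
  fix v i assume v: "v \<in> V" and i: "i < length (out_ids v)"
    and in_class: "i * num_colours c n + colour2 v ! i < Suc k"
  let ?t3 = "Suc (Suc (Suc (class_start k)))"
  define p where "p = out_nbr v i"
  show "partner ?t3 v \<noteq> None \<or> partner ?t3 (out_nbr v i) \<noteq> None"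
  proof (cases "i * num_colours c n + colour2 v ! i < k")
    case True
    then show ?thesis using assms(2) v i partner_mono_ne[of "class_start k" ?t3]
      unfolding classes_covered_def by force
  next
    case False
    have less: "colour2 v ! i < num_colours c n"
      using colour2_less[OF v] length_out_ids_le[OF v] i by simp
    have "k = colour2 v ! i + i * num_colours c n" using in_class False by simp
    then have i_class: "k div num_colours c n = i" "k mod num_colours c n = colour2 v ! i"
      using less by simp_all
    show ?thesis
    proof (cases "partner (class_start k) v = None \<and> partner (class_start k) p = None")
      case True
      then have "proposes k v" unfolding proposes_def i_class p_def using i by simp
      then have "v \<in> proposers k p"
        using proposal_after_propose[OF assms(1) v] out_nbr_edge[OF i] edge_sym v
        unfolding proposers_def nbrs_def i_class p_def by simp
      moreover have "colour2 v ! i \<noteq> colour2 p ! i"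
        using proper_colour2 v i unfolding proper_labelling_def p_def by blast
      then have "\<not> proposes k p" unfolding proposes_def i_class by auto
      then have "proposal (Suc (class_start k)) p = None"
        using proposal_after_propose[OF assms(1)] out_nbr_edge[OF i] unfolding p_def by simp
      ultimately have "partner (Suc (Suc (class_start k))) p \<noteq> None"
        using partner_after_accept[OF assms(1), of p] True by auto
      then show ?thesis
        using partner_mono_ne[of "Suc (Suc (class_start k))" ?t3] unfolding p_def by simp
    next
      case False
      then show ?thesis using partner_mono_ne[of "class_start k" ?t3] unfolding p_def by auto
    qed
  qed
qed

lemma consistent_partners_final: "consistent_partners (num_rounds c n)"
proof -
  have "consistent_partners (class_start k)" if "k \<le> num_classes" for k
    using that
  proof (induction k)
    case 0
    then show ?case using before_matching unfolding consistent_partners_def class_start_def by simp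
  qed (simp add: consistent_after_class)
  then show ?thesis unfolding num_rounds_class_start by simp
qed

lemma classes_covered_final: "classes_covered num_classes"
proof -
  have "classes_covered k" if "k \<le> num_classes" for k
    using that
  proof (induction k)
    case 0
    show ?case unfolding classes_covered_def by simp
  qed (simp add: covered_after_class)
  then show ?thesis by simp
qed

lemma edge_covered_final:
  assumes "E a b" shows "partner (num_rounds c n) a \<noteq> None \<or> partner (num_rounds c n) b \<noteq> None"
proof -
  have "partner (num_rounds c n) v \<noteq> None \<or> partner (num_rounds c n) u \<noteq> None"
    if uv: "u \<in> out_nbrs v" "v \<in> V" for u v
  proof -
    obtain i where i: "i < length (out_ids v)" "out_nbr v i = u" using out_nbr_index[OF uv(1)] .
    have "i < peel_degree n" using length_out_ids_le[OF uv(2)] i(1) by simp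
    have "colour2 v ! i < num_colours c n"
      using colour2_less[OF uv(2) \<open>i < peel_degree n\<close>] .
    then have "i * num_colours c n + colour2 v ! i < Suc i * num_colours c n" by simp
    also have "\<dots> \<le> num_classes" using \<open>i < peel_degree n\<close> by (intro mult_le_mono1) simp
    finally have "i * num_colours c n + colour2 v ! i < num_classes" .
    then show ?thesis using classes_covered_final uv(2) i
      unfolding classes_covered_def num_rounds_class_start by blast
  qed
  then show ?thesis using edge_oriented[OF assms] edge_in_V[OF assms] by blast
qed

theorem solves_maximal_matching_final:
  "solves_maximal_matching V E ident (partner (num_rounds c n))"
  using simple inj_ident consistent_partners_final edge_covered_final
  unfolding consistent_partners_def by (intro solves_maximal_matchingI) blast+

end

theorem mainTheorem4:
  fixes c :: nat
  assumes "c \<ge> 1"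
  shows "\<exists>T :: nat \<Rightarrow> nat.
    (\<lambda>n. real (T n)) \<in> O(\<lambda>n. ln (real n) / ln (ln (real n))) \<and>
    (\<exists>(init :: nat \<Rightarrow> nat \<Rightarrow> nat) (step :: nat \<Rightarrow> nat \<Rightarrow> nat \<Rightarrow> nat multiset \<Rightarrow> nat)
        (out :: nat \<Rightarrow> nat \<Rightarrow> nat option).
      \<forall>V E ident. is_tree V E \<and> valid_ids c V ident \<longrightarrow>
        solves_maximal_matching V E ident
          (\<lambda>v. out (card V) (local_state init step V E ident (T (card V)) v)))"
proof -
  define init where "init = (\<lambda>n x. to_nat (init_state n x))"
  define encoded_step where
    "encoded_step = (\<lambda>n t s M. to_nat (step c n t (from_nat s) (image_mset from_nat M)))"
  define out where "out = (\<lambda>(n :: nat) s. st_partner (from_nat s :: node_state))"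
  have "solves_maximal_matching V E ident
      (\<lambda>v. out (card V) (local_state init encoded_step V E ident (num_rounds c (card V)) v))"
    if "is_tree V E \<and> valid_ids c V ident" for V E ident
  proof -
    interpret tree_run V E ident c using that assms by unfold_locales auto
    have "local_state init encoded_step V E ident t v = to_nat (state t v)" for t v
      unfolding init_def encoded_step_def state_def by (rule local_state_encode)
    then show ?thesis using solves_maximal_matching_final unfolding out_def by simp
  qed
  then show ?thesis using num_rounds_bigo[OF assms] by blast
qed

end
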